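(* (i) For every $n\ge 0$ and $i\in\{0,1\}$, $v_n(x,i)$ is concave in $x$, i.e. $\Delta_n(x,i)\le\Delta_n(x+1,i)$ for all $x\ge0$. (ii) For every $n\ge0$, with $B^s_n=1+T_{\Delta_n(\cdot,0)}(c/\delta)$ and $B^d_{n+1}=T_{\Delta_{n+1}(\cdot,0)}(R)$, the optimal decisions satisfy $a^s_{n+1}(0)=l$; for $x>0$, $a^s_{n+1}(x)=l$ if $x\le B^s_n$ and $a^s_{n+1}(x)=h$ if $x>B^s_n$; and for $x\ge 0$, $a^d_{n+1}(x)=1$ if $x\le B^d_{n+1}$ and $a^d_{n+1}(x)=0$ if $x>B^d_{n+1}$.
   Context: Parameters: $\lambda>0$, $0<\mu_l<\mu_h$, $\delta=\mu_h-\mu_l$, $R\ge 0$, $c>0$, and $h:\{0,1,2,\dots\}\to\mathbb{R}$ nondecreasing and convex with $h(0)=0$; the rates are normalized so that $\lambda+\mu_h+\beta=1$ for a discount rate $\beta>0$. Finite-horizon value functions on $S=\{0,1,2,\dots\}\times\{0,1\}$: $v_0\equiv 0$ and for $n\ge 0$: $v_{n+1}(0,0)=\lambda v_n(0,1)+\mu_h v_n(0,0)$; $v_{n+1}(x,0)=-h(x)+\lambda v_n(x,1)+\mu_l v_n(x-1,0)+\max\{\delta v_n(x,0),-c+\delta v_n(x-1,0)\}$ for $x\ge1$; $v_{n+1}(x,1)=\max\{R+v_{n+1}(x+1,0),v_{n+1}(x,0)\}$ for $x\ge 0$. Define $\Delta_n(x,i)=v_n(x,i)-v_n(x+1,i)$.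 Optimal decisions with $n+1$ steps remaining: admission decision in state $(x,1)$, $x\ge0$: $a^d_{n+1}(x)=1$ (admit) if $\Delta_{n+1}(x,0)\le R$ and $0$ (reject) otherwise; service-rate decision in state $(x,0)$: $a^s_{n+1}(0)=l$, and for $x>0$, $a^s_{n+1}(x)=l$ (low rate $\mu_l$) if $\Delta_n(x-1,0)\le c/\delta$ and $h$ (high rate $\mu_h$) otherwise. Threshold function: for $f:\{0,1,2,\dots\}\to\mathbb{R}$ and $\theta\in\mathbb{R}$, $T_f(\theta)=\sup\{k\ge0: f(k)\le\theta\}$, with $\sup\emptyset=-1$ (the value $+\infty$ is allowed). *)

theory Defs
  imports "HOL-Analysis.Analysis"
begin

(* State (x,i): x :: nat queue length, i :: nat in {0,1} (1 = an arrival is waiting).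
   Parameters: lam = lambda, mul = mu_l, muh = mu_h, c, R, h. delta = muh - mul. *)

fun vzero :: "real \<Rightarrow> real \<Rightarrow> real \<Rightarrow> real \<Rightarrow> real \<Rightarrow> (nat \<Rightarrow> real) \<Rightarrow> nat \<Rightarrow> nat \<Rightarrow> real" where
  "vzero lam mul muh c R h 0 x = 0"
| "vzero lam mul muh c R h (Suc n) 0 =
     lam * (if n = 0 then 0 else max (R + vzero lam mul muh c R h n 1) (vzero lam mul muh c R h n 0))
     + muh * vzero lam mul muh c R h n 0"
| "vzero lam mul muh c R h (Suc n) (Suc x) =
     - h (Suc x)
     + lam * (if n = 0 then 0 else max (R + vzero lam mul muh c R h n (Suc (Suc x))) (vzero lam mul muh c R h n (Suc x)))
     + mul * vzero lam mul muh c R h n x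
     + max ((muh - mul) * vzero lam mul muh c R h n (Suc x)) (- c + (muh - mul) * vzero lam mul muh c R h n x)"

definition vfun :: "real \<Rightarrow> real \<Rightarrow> real \<Rightarrow> real \<Rightarrow> real \<Rightarrow> (nat \<Rightarrow> real) \<Rightarrow> nat \<Rightarrow> nat \<Rightarrow> nat \<Rightarrow> real" where
  "vfun lam mul muh c R h n x i =
     (if i = 0 then vzero lam mul muh c R h n x
      else if n = 0 then 0
      else max (R + vzero lam mul muh c R h n (Suc x)) (vzero lam mul muh c R h n x))"

definition Delta :: "real \<Rightarrow> real \<Rightarrow> real \<Rightarrow> real \<Rightarrow> real \<Rightarrow> (nat \<Rightarrow> real) \<Rightarrow> nat \<Rightarrow> nat \<Rightarrow> nat \<Rightarrow> real" where
  "Delta lam mul muh c R h n x i = vfun lam mul muh c R h n x i - vfun lam mul muh c R h n (Suc x) i"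

definition Thr :: "(nat \<Rightarrow> real) \<Rightarrow> real \<Rightarrow> ereal" where
  "Thr f \<theta> = (if {k. f k \<le> \<theta>} = {} then -1 else Sup ((\<lambda>k. ereal (real k)) ` {k. f k \<le> \<theta>}))"

datatype srate = Low | High

(* service-rate decision a^s_{n+1}(x) (argument m = n+1) *)
fun a_s :: "real \<Rightarrow> real \<Rightarrow> real \<Rightarrow> real \<Rightarrow> real \<Rightarrow> (nat \<Rightarrow> real) \<Rightarrow> nat \<Rightarrow> nat \<Rightarrow> srate" where
  "a_s lam mul muh c R h m 0 = Low"
| "a_s lam mul muh c R h m (Suc x) =
     (if Delta lam mul muh c R h (m - 1) x 0 \<le> c / (muh - mul) then Low else High)"

(* admission decision a^d_m(x): 1 = admit, 0 = reject *)
definition a_d :: "real \<Rightarrow> real \<Rightarrow> real \<Rightarrow> real \<Rightarrow> real \<Rightarrow> (nat \<Rightarrow> real) \<Rightarrow> nat \<Rightarrow> nat \<Rightarrow> nat" where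
  "a_d lam mul muh c R h m x = (if Delta lam mul muh c R h m x 0 \<le> R then 1 else 0)"

end

theory Submission
  imports Defs
begin

(* Write f for the map x \<mapsto> v_n(x,0).  The key invariant is that f is nonincreasing and
   concave, i.e. its decrements f x - f (x+1) are nonnegative and nondecreasing in x.
   We first show that this class of sequences is closed under the building blocks of the
   dynamic-programming recursion: nonnegative linear combinations, the shift x \<mapsto> f (x-1),
   the admission operator x \<mapsto> max (R + f (x+1)) (f x) and the service-rate operator
   x \<mapsto> max (f x) (f (x-1) - c).  Writing v_{n+1}(\<cdot>,0) as such a combination of -h and
   v_n(\<cdot>,0), induction on n gives part (i) for i = 0; part (i) for i = 1 follows because
   v_n(\<cdot>,1) is the admission operator applied to v_n(\<cdot>,0).
   For part (ii), a nondecreasing sequence D satisfies  x \<le> T_D(\<theta>)  iff  D x \<le> \<theta>,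
   so the threshold descriptions of both decisions are restatements of their definitions. *)

definition concave_nonincr :: "(nat \<Rightarrow> real) \<Rightarrow> bool" where
  "concave_nonincr f \<longleftrightarrow>
     (\<forall>x. f (Suc x) \<le> f x \<and> f x - f (Suc x) \<le> f (Suc x) - f (Suc (Suc x)))"

lemma concave_nonincrD:
  assumes "concave_nonincr f"
  shows "f (Suc x) \<le> f x" and "f x - f (Suc x) \<le> f (Suc x) - f (Suc (Suc x))"
  using assms by (auto simp: concave_nonincr_def)

lemma concave_nonincr_const: "concave_nonincr (\<lambda>x. 0)"
  by (simp add: concave_nonincr_def)

lemma concave_nonincr_add:
  assumes "concave_nonincr f" and "concave_nonincr g"
  shows "concave_nonincr (\<lambda>x. f x + g x)"
  using assms unfolding concave_nonincr_def by (smt (verit))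

lemma concave_nonincr_scale:
  assumes "a \<ge> 0" and "concave_nonincr f"
  shows "concave_nonincr (\<lambda>x. a * f x)"
proof -
  have "a * f (Suc x) \<le> a * f x" for x
    using assms by (intro mult_left_mono concave_nonincrD)
  moreover have "a * (f x - f (Suc x)) \<le> a * (f (Suc x) - f (Suc (Suc x)))" for x
    using assms by (intro mult_left_mono concave_nonincrD)
  ultimately show ?thesis
    by (simp add: concave_nonincr_def algebra_simps)
qed

(* The shift x \<mapsto> f (x - 1) repeats f 0 once, creating a zero decrement at the front. *)
lemma concave_nonincr_shift:
  assumes "concave_nonincr f"
  shows "concave_nonincr (\<lambda>x. f (x - 1))"
  unfolding concave_nonincr_def
proof
  fix x
  show "f (Suc x - 1) \<le> f (x - 1) \<and>
        f (x - 1) - f (Suc x - 1) \<le> f (Suc x - 1) - f (Suc (Suc x) - 1)"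
    using concave_nonincrD[OF assms] by (cases x) auto
qed

lemma concave_nonincr_neg_convex:
  fixes h :: "nat \<Rightarrow> real"
  assumes "mono h" and "\<And>x. h (Suc x) - h x \<le> h (Suc (Suc x)) - h (Suc x)"
  shows "concave_nonincr (\<lambda>x. - h x)"
  using assms by (auto simp: concave_nonincr_def mono_iff_le_Suc algebra_simps)

(* Admission operator: v(x,1) = max (R + v(x+1,0)) (v(x,0)).  Concavity is preserved since
   the argmax switches from admitting to rejecting at most once, as x grows. *)
definition admit :: "real \<Rightarrow> (nat \<Rightarrow> real) \<Rightarrow> nat \<Rightarrow> real" where
  "admit R f x = max (R + f (Suc x)) (f x)"

lemma concave_nonincr_admit:
  assumes "concave_nonincr f" and "R \<ge> 0"
  shows "concave_nonincr (admit R f)"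
  unfolding concave_nonincr_def admit_def
proof
  fix x
  note d = concave_nonincrD(1)[OF assms(1)] and c = concave_nonincrD(2)[OF assms(1)]
  show "max (R + f (Suc (Suc x))) (f (Suc x)) \<le> max (R + f (Suc x)) (f x) \<and>
        max (R + f (Suc x)) (f x) - max (R + f (Suc (Suc x))) (f (Suc x))
          \<le> max (R + f (Suc (Suc x))) (f (Suc x))
             - max (R + f (Suc (Suc (Suc x)))) (f (Suc (Suc x)))"
    using c[of x] c[of "Suc x"] d[of x] d[of "Suc x"] d[of "Suc (Suc x)"] assms(2)
    by (smt (verit))
qed

(* Service-rate operator on g = \<delta> v: in state x > 0 choose between the low rate (value g x)
   and the high rate (value g (x-1) at cost c); in state 0 only the low rate is available. *)
fun serve :: "real \<Rightarrow> (nat \<Rightarrow> real) \<Rightarrow> nat \<Rightarrow> real" where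
  "serve c g 0 = g 0"
| "serve c g (Suc x) = max (g (Suc x)) (- c + g x)"

lemma concave_nonincr_serve:
  assumes "concave_nonincr g" and "c \<ge> 0"
  shows "concave_nonincr (serve c g)"
  unfolding concave_nonincr_def
proof
  fix x
  note d = concave_nonincrD(1)[OF assms(1)] and cc = concave_nonincrD(2)[OF assms(1)]
  show "serve c g (Suc x) \<le> serve c g x \<and>
        serve c g x - serve c g (Suc x) \<le> serve c g (Suc x) - serve c g (Suc (Suc x))"
  proof (cases x)
    case 0
    then show ?thesis
      using cc[of 0] d[of 0] d[of 1] assms(2) by (simp add: max_def)
  next
    case (Suc y)
    then show ?thesis
      using cc[of y] cc[of "Suc y"] d[of y] d[of "Suc y"] d[of "Suc (Suc y)"] assms(2)
      by simp (smt (verit))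
  qed
qed

(* One step of the recursion for v(\<cdot>,0), written through the operators above; the
   lambda-term is the value after an arrival, which is 0 when no steps remain. *)
lemma vzero_Suc_decomp:
  fixes h :: "nat \<Rightarrow> real"
  assumes "h 0 = 0"
  shows "vzero lam mul muh c R h (Suc n) =
         (\<lambda>x. - h x
              + lam * (if n = 0 then 0 else admit R (vzero lam mul muh c R h n) x)
              + mul * vzero lam mul muh c R h n (x - 1)
              + serve c (\<lambda>y. (muh - mul) * vzero lam mul muh c R h n y) x)"
proof
  fix x
  show "vzero lam mul muh c R h (Suc n) x = - h x
              + lam * (if n = 0 then 0 else admit R (vzero lam mul muh c R h n) x)
              + mul * vzero lam mul muh c R h n (x - 1)
              + serve c (\<lambda>y. (muh - mul) * vzero lam mul muh c R h n y) x"
    using assms by (cases x) (simp_all add: admit_def algebra_simps)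
qed

lemma vzero_concave_nonincr:
  fixes h :: "nat \<Rightarrow> real"
  assumes "lam \<ge> 0" and "mul \<ge> 0" and "mul \<le> muh" and "R \<ge> 0" and "c \<ge> 0"
    and "mono h" and "\<And>x. h (Suc x) - h x \<le> h (Suc (Suc x)) - h (Suc x)" and "h 0 = 0"
  shows "concave_nonincr (vzero lam mul muh c R h n)"
proof (induction n)
  case 0
  show ?case by (simp add: concave_nonincr_def)
next
  case (Suc n)
  let ?f = "vzero lam mul muh c R h n"
  have arrival: "concave_nonincr (\<lambda>x. if n = 0 then 0 else admit R ?f x)"
    using concave_nonincr_admit[OF Suc assms(4)] concave_nonincr_const by (cases "n = 0") auto
  have service: "concave_nonincr (serve c (\<lambda>y. (muh - mul) * ?f y))"
    using assms(3,5) by (intro concave_nonincr_serve concave_nonincr_scale Suc) auto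
  show ?case
    unfolding vzero_Suc_decomp[where h = h, OF assms(8)]
    by (intro concave_nonincr_add concave_nonincr_neg_convex concave_nonincr_scale
              concave_nonincr_shift arrival service Suc assms(1,2,6,7))
qed

lemma Delta_0: "Delta lam mul muh c R h n x 0 =
    vzero lam mul muh c R h n x - vzero lam mul muh c R h n (Suc x)"
  by (simp add: Delta_def vfun_def)

lemma Delta_1: "Delta lam mul muh c R h n x 1 =
    (if n = 0 then 0
     else admit R (vzero lam mul muh c R h n) x - admit R (vzero lam mul muh c R h n) (Suc x))"
  by (simp add: Delta_def vfun_def admit_def)

lemma Delta_mono_in_x:
  fixes h :: "nat \<Rightarrow> real"
  assumes "lam \<ge> 0" and "mul \<ge> 0" and "mul \<le> muh" and "R \<ge> 0" and "c \<ge> 0"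
    and "mono h" and "\<And>x. h (Suc x) - h x \<le> h (Suc (Suc x)) - h (Suc x)" and "h 0 = 0"
    and "i \<in> {0, 1}"
  shows "Delta lam mul muh c R h n x i \<le> Delta lam mul muh c R h n (Suc x) i"
proof -
  have v0: "concave_nonincr (vzero lam mul muh c R h n)"
    using assms(1-8) by (rule vzero_concave_nonincr)
  have "Delta lam mul muh c R h n x 0 \<le> Delta lam mul muh c R h n (Suc x) 0"
    using concave_nonincrD(2)[OF v0] by (simp add: Delta_0)
  moreover have "Delta lam mul muh c R h n x 1 \<le> Delta lam mul muh c R h n (Suc x) 1"
    unfolding Delta_1 using concave_nonincrD(2)[OF concave_nonincr_admit[OF v0 assms(4)]] by simp
  ultimately show ?thesis
    using assms(9) by auto
qed

lemma le_Thr_iff: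
  fixes D :: "nat \<Rightarrow> real"
  assumes "mono D"
  shows "ereal (real x) \<le> Thr D \<theta> \<longleftrightarrow> D x \<le> \<theta>"
proof
  assume "D x \<le> \<theta>"
  then show "ereal (real x) \<le> Thr D \<theta>"
    unfolding Thr_def by (auto intro: SUP_upper)
next
  assume below: "ereal (real x) \<le> Thr D \<theta>"
  show "D x \<le> \<theta>"
  proof (rule ccontr)
    assume above: "\<not> D x \<le> \<theta>"
    have smaller: "k < x" if "D k \<le> \<theta>" for k
      using above that monoD[OF assms, of x k] by (cases "k < x") auto
    have "Thr D \<theta> \<le> ereal (real x - 1)"
    proof (cases "{k. D k \<le> \<theta>} = {}")
      case True
      then show ?thesis by (simp add: Thr_def one_ereal_def)
    next
      case False
      have "Sup ((\<lambda>k. ereal (real k)) ` {k. D k \<le> \<theta>}) \<le> ereal (real x - 1)"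
        using smaller by (intro SUP_least) force
      then show ?thesis unfolding Thr_def if_not_P[OF False] .
    qed
    with below have "ereal (real x) \<le> ereal (real x - 1)" by (rule order_trans)
    then show False by simp
  qed
qed

lemma a_s_Suc_iff:
  assumes "mono (\<lambda>x. Delta lam mul muh c R h n x 0)"
  shows "a_s lam mul muh c R h (Suc n) (Suc y) = Low \<longleftrightarrow>
         ereal (real (Suc y)) \<le> 1 + Thr (\<lambda>x. Delta lam mul muh c R h n x 0) (c / (muh - mul))"
proof -
  have cancel: "1 + ereal (real y) \<le> 1 + T \<longleftrightarrow> ereal (real y) \<le> T" for T :: ereal
    by (cases T) (simp_all add: one_ereal_def)
  have "ereal (real (Suc y)) = 1 + ereal (real y)"
    by (simp add: one_ereal_def)
  then have "ereal (real (Suc y)) \<le> 1 + Thr (\<lambda>x. Delta lam mul muh c R h n x 0) (c / (muh - mul))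
             \<longleftrightarrow> ereal (real y) \<le> Thr (\<lambda>x. Delta lam mul muh c R h n x 0) (c / (muh - mul))"
    by (simp only: cancel)
  also have "\<dots> \<longleftrightarrow> Delta lam mul muh c R h n y 0 \<le> c / (muh - mul)"
    by (rule le_Thr_iff[OF assms])
  finally show ?thesis by simp
qed

lemma a_d_iff:
  assumes "mono (\<lambda>x. Delta lam mul muh c R h m x 0)"
  shows "a_d lam mul muh c R h m x = 1 \<longleftrightarrow>
         ereal (real x) \<le> Thr (\<lambda>x. Delta lam mul muh c R h m x 0) R"
  using le_Thr_iff[OF assms] by (simp add: a_d_def)

lemma threshold_decisions:
  assumes "mono (\<lambda>x. Delta lam mul muh c R h n x 0)"
    and "mono (\<lambda>x. Delta lam mul muh c R h (Suc n) x 0)"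
  shows "let Bs = 1 + Thr (\<lambda>x. Delta lam mul muh c R h n x 0) (c / (muh - mul));
             Bd = Thr (\<lambda>x. Delta lam mul muh c R h (Suc n) x 0) R
         in a_s lam mul muh c R h (Suc n) 0 = Low
          \<and> (\<forall>x > 0. (ereal (real x) \<le> Bs \<longrightarrow> a_s lam mul muh c R h (Suc n) x = Low)
                    \<and> (ereal (real x) > Bs \<longrightarrow> a_s lam mul muh c R h (Suc n) x = High))
          \<and> (\<forall>x. (ereal (real x) \<le> Bd \<longrightarrow> a_d lam mul muh c R h (Suc n) x = 1)
                \<and> (ereal (real x) > Bd \<longrightarrow> a_d lam mul muh c R h (Suc n) x = 0))"
proof -
  have low_or_high: "a \<noteq> Low \<Longrightarrow> a = High" for a
    by (cases a) auto
  have admit_or_reject: "a_d lam mul muh c R h (Suc n) x \<noteq> 1 \<Longrightarrow> a_d lam mul muh c R h (Suc n) x = 0"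
    for x by (simp add: a_d_def split: if_splits)
  show ?thesis
    unfolding Let_def
  proof (intro conjI allI impI)
    fix x :: nat
    assume "0 < x"
    then obtain y where y: "x = Suc y" by (auto simp: gr0_conv_Suc)
    note service = a_s_Suc_iff[OF assms(1), of y]
    show "ereal (real x) \<le> 1 + Thr (\<lambda>x. Delta lam mul muh c R h n x 0) (c / (muh - mul))
          \<Longrightarrow> a_s lam mul muh c R h (Suc n) x = Low"
      using service y by simp
    show "1 + Thr (\<lambda>x. Delta lam mul muh c R h n x 0) (c / (muh - mul)) < ereal (real x)
          \<Longrightarrow> a_s lam mul muh c R h (Suc n) x = High"
      using service y low_or_high by (simp only: not_le[symmetric]) blast
  next
    fix x :: nat
    note admission = a_d_iff[OF assms(2), of x]
    show "ereal (real x) \<le> Thr (\<lambda>x. Delta lam mul muh c R h (Suc n) x 0) R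
          \<Longrightarrow> a_d lam mul muh c R h (Suc n) x = 1"
      using admission by blast
    show "Thr (\<lambda>x. Delta lam mul muh c R h (Suc n) x 0) R < ereal (real x)
          \<Longrightarrow> a_d lam mul muh c R h (Suc n) x = 0"
      using admission admit_or_reject by (simp only: not_le[symmetric]) blast
  qed simp
qed

theorem theorem2:
  fixes lam mul muh c R beta :: real and h :: "nat \<Rightarrow> real"
  assumes "lam > 0" and "0 < mul" and "mul < muh" and "R \<ge> 0" and "c > 0"
    and "beta > 0" and "lam + muh + beta = 1"
    and "mono h" and "\<And>x. h (Suc x) - h x \<le> h (Suc (Suc x)) - h (Suc x)" and "h 0 = 0"
  shows "(\<forall>n x i. i \<in> {0, 1} \<longrightarrow>
            Delta lam mul muh c R h n x i \<le> Delta lam mul muh c R h n (Suc x) i)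
       \<and> (\<forall>n.
            let Bs = 1 + Thr (\<lambda>x. Delta lam mul muh c R h n x 0) (c / (muh - mul));
                Bd = Thr (\<lambda>x. Delta lam mul muh c R h (Suc n) x 0) R
            in a_s lam mul muh c R h (Suc n) 0 = Low
             \<and> (\<forall>x > 0. (ereal (real x) \<le> Bs \<longrightarrow> a_s lam mul muh c R h (Suc n) x = Low)
                       \<and> (ereal (real x) > Bs \<longrightarrow> a_s lam mul muh c R h (Suc n) x = High))
             \<and> (\<forall>x. (ereal (real x) \<le> Bd \<longrightarrow> a_d lam mul muh c R h (Suc n) x = 1)
                   \<and> (ereal (real x) > Bd \<longrightarrow> a_d lam mul muh c R h (Suc n) x = 0)))"
proof -
  have concave: "Delta lam mul muh c R h n x i \<le> Delta lam mul muh c R h n (Suc x) i"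
    if "i \<in> {0, 1}" for n x i
    using assms(1-5,8-10) that by (intro Delta_mono_in_x) auto
  have mono0: "mono (\<lambda>x. Delta lam mul muh c R h n x 0)" for n
    using concave[of 0] by (simp add: mono_iff_le_Suc)
  show ?thesis
    using concave threshold_decisions[OF mono0 mono0] by blast
qed

end
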